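(* Let $\mathbf v,\mathbf w,\mathbf k,\boldsymbol\ell$ be $m$-tuples of positive integers with $k_i\ge2$ for all $i$, $\mathbf k\le\mathbf w\le\mathbf v$ and $\mathbf k\le\boldsymbol\ell\le\mathbf v$ (entrywise). Then $C(\mathbf v,\mathbf k,2)\ge C(\mathbf w,\mathbf k,2)$ and $C(\mathbf v,\mathbf k,2)\ge C(\mathbf v,\boldsymbol\ell,2)$.
   Context: For $m$-tuples $\mathbf a,\mathbf b$ of positive integers with $\mathbf b\le\mathbf a$ entrywise: let $X_1,\dots,X_m$ be pairwise disjoint sets with $|X_i|=a_i$; a block is an $m$-tuple $(B_1,\dots,B_m)$ with $B_i\subseteq X_i$, $|B_i|=b_i$; an $m$-tuple of sets $(T_1,\dots,T_m)$ is $(\mathbf a,\mathbf b,2)$-admissible if $T_i\subseteq X_i$, $|T_i|\le b_i$ and $\sum|T_i|=2$, and is contained in a block if $T_i\subseteq B_i$ for all $i$. A ${\rm GC}(\mathbf a,\mathbf b,2)$ is a finite family (repetitions allowed) of blocks containing every admissible tuple in at least one block; $C(\mathbf a,\mathbf b,2)$ is the minimum number of blocks. *)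

theory Defs
  imports Main
begin

(* m-tuples are functions nat => nat, only indices i < m matter.
   The ground set X_i is modelled as {..<a i} tagged by the index i
   (the tuple position), so the X_i are disjoint by construction. *)

definition is_block :: "nat \<Rightarrow> (nat \<Rightarrow> nat) \<Rightarrow> (nat \<Rightarrow> nat) \<Rightarrow> (nat \<Rightarrow> nat set) \<Rightarrow> bool" where
  "is_block m a b B \<longleftrightarrow> (\<forall>i<m. B i \<subseteq> {..<a i} \<and> card (B i) = b i)"

definition admissible :: "nat \<Rightarrow> (nat \<Rightarrow> nat) \<Rightarrow> (nat \<Rightarrow> nat) \<Rightarrow> nat \<Rightarrow> (nat \<Rightarrow> nat set) \<Rightarrow> bool" where
  "admissible m a b t T \<longleftrightarrow>
     (\<forall>i<m. T i \<subseteq> {..<a i} \<and> card (T i) \<le> b i) \<and> (\<Sum>i<m. card (T i)) = t"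

definition contained_in :: "nat \<Rightarrow> (nat \<Rightarrow> nat set) \<Rightarrow> (nat \<Rightarrow> nat set) \<Rightarrow> bool" where
  "contained_in m T B \<longleftrightarrow> (\<forall>i<m. T i \<subseteq> B i)"

(* a GC(a,b,t): a finite family of blocks (list, repetitions allowed) *)
definition is_GC :: "nat \<Rightarrow> (nat \<Rightarrow> nat) \<Rightarrow> (nat \<Rightarrow> nat) \<Rightarrow> nat \<Rightarrow> (nat \<Rightarrow> nat set) list \<Rightarrow> bool" where
  "is_GC m a b t F \<longleftrightarrow> (\<forall>B\<in>set F. is_block m a b B) \<and>
     (\<forall>T. admissible m a b t T \<longrightarrow> (\<exists>B\<in>set F. contained_in m T B))"

definition GC_num :: "nat \<Rightarrow> (nat \<Rightarrow> nat) \<Rightarrow> (nat \<Rightarrow> nat) \<Rightarrow> nat \<Rightarrow> nat" where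
  "GC_num m a b t = (LEAST n. \<exists>F. is_GC m a b t F \<and> length F = n)"

end

theory Submission
  imports Defs "HOL-Library.FuncSet"
begin

text \<open>An optimal covering for \<open>(v, k)\<close> is turned, block by block, into a covering of the same
size for \<open>(w, k)\<close> resp. \<open>(v, l)\<close>. Every admissible pair for \<open>(w, k)\<close> is admissible for
\<open>(v, k)\<close>, and a block \<open>B\<close> is replaced by any \<open>k\<close>-block of the smaller ground sets containing
the trace of \<open>B\<close> on them. Every admissible pair for \<open>(v, l)\<close> has at most \<open>2 \<le> k\<^sub>i\<close> points in
each coordinate, so it is admissible for \<open>(v, k)\<close>, and a block is replaced by any \<open>l\<close>-block
containing it.\<close>

lemma is_block_superset_exists:
  assumes "\<forall>i<m. S i \<subseteq> {..<a i} \<and> card (S i) \<le> b i \<and> b i \<le> a i"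
  shows "\<exists>B. is_block m a b B \<and> contained_in m S B"
proof -
  have "\<forall>i<m. \<exists>X. S i \<subseteq> X \<and> X \<subseteq> {..<a i} \<and> card X = b i"
    using assms by (simp add: exists_subset_between)
  then obtain B where "\<forall>i<m. S i \<subseteq> B i \<and> B i \<subseteq> {..<a i} \<and> card (B i) = b i"
    by metis
  then show ?thesis unfolding is_block_def contained_in_def by blast
qed

lemma finite_extensional_blocks: "finite {B \<in> extensional {..<m}. is_block m a b B}"
proof (rule finite_subset)
  show "{B \<in> extensional {..<m}. is_block m a b B} \<subseteq> Pi\<^sub>E {..<m} (\<lambda>i. Pow {..<a i})"
    unfolding is_block_def by (intro subsetI) (simp add: PiE_iff)
qed (auto intro: finite_PiE)

lemma is_GC_exists:
  assumes "\<forall>i<m. b i \<le> a i"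
  shows "\<exists>F. is_GC m a b t F"
proof -
  obtain F where F: "set F = {B \<in> extensional {..<m}. is_block m a b B}"
    using finite_list[OF finite_extensional_blocks] by blast
  have "\<exists>B\<in>set F. contained_in m T B" if "admissible m a b t T" for T
  proof -
    have "\<forall>i<m. T i \<subseteq> {..<a i} \<and> card (T i) \<le> b i \<and> b i \<le> a i"
      using that assms unfolding admissible_def by simp
    then obtain B where B: "is_block m a b B" "contained_in m T B"
      using is_block_superset_exists by blast
    have "restrict B {..<m} \<in> set F" "contained_in m T (restrict B {..<m})"
      using B unfolding F is_block_def contained_in_def by auto
    then show ?thesis by blast
  qed
  then have "is_GC m a b t F" unfolding is_GC_def F by blast
  then show ?thesis ..
qed

lemma GC_num_le:
  assumes "is_GC m a b t F"
  shows "GC_num m a b t \<le> length F"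
  unfolding GC_num_def using assms by (intro Least_le) blast

lemma GC_num_attained:
  assumes "\<forall>i<m. b i \<le> a i"
  obtains F where "is_GC m a b t F" "length F = GC_num m a b t"
proof -
  have "\<exists>n F. is_GC m a b t F \<and> length F = n" using is_GC_exists[OF assms] by blast
  from LeastI_ex[OF this] show ?thesis using that unfolding GC_num_def by blast
qed

lemma GC_num_le_GC_num:
  assumes "\<forall>i<m. b i \<le> a i"
    and admissible: "\<And>T. admissible m a' b' t T \<Longrightarrow> admissible m a b t T"
    and replace: "\<And>B. is_block m a b B \<Longrightarrow> \<exists>B'. is_block m a' b' B' \<and>
        (\<forall>T. admissible m a' b' t T \<longrightarrow> contained_in m T B \<longrightarrow> contained_in m T B')"
  shows "GC_num m a' b' t \<le> GC_num m a b t"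
proof -
  obtain F where F: "is_GC m a b t F" "length F = GC_num m a b t"
    using GC_num_attained[OF assms(1)] .
  obtain f where f: "\<And>B. is_block m a b B \<Longrightarrow> is_block m a' b' (f B) \<and>
      (\<forall>T. admissible m a' b' t T \<longrightarrow> contained_in m T B \<longrightarrow> contained_in m T (f B))"
    using replace by metis
  have "is_GC m a' b' t (map f F)"
    unfolding is_GC_def
  proof (intro conjI allI impI ballI)
    fix B' assume "B' \<in> set (map f F)"
    then obtain B where "B \<in> set F" "B' = f B" by auto
    then show "is_block m a' b' B'" using F(1) f unfolding is_GC_def by blast
  next
    fix T assume T: "admissible m a' b' t T"
    then obtain B where "B \<in> set F" "contained_in m T B"
      using F(1) admissible unfolding is_GC_def by blast
    then show "\<exists>B'\<in>set (map f F). contained_in m T B'"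
      using F(1) f T unfolding is_GC_def by auto
  qed
  from GC_num_le[OF this] show ?thesis using F(2) by simp
qed

lemma GC_num_mono_ground:
  assumes "\<forall>i<m. b i \<le> w i \<and> w i \<le> v i"
  shows "GC_num m w b t \<le> GC_num m v b t"
proof (rule GC_num_le_GC_num)
  show "\<forall>i<m. b i \<le> v i" using assms by force
next
  fix T assume "admissible m w b t T"
  then show "admissible m v b t T" using assms unfolding admissible_def by force
next
  fix B assume B: "is_block m v b B"
  have "B i \<inter> {..<w i} \<subseteq> {..<w i} \<and> card (B i \<inter> {..<w i}) \<le> b i \<and> b i \<le> w i"
    if "i < m" for i
  proof -
    have "card (B i \<inter> {..<w i}) \<le> card (B i)"
      using B that unfolding is_block_def by (meson card_mono finite_lessThan finite_subset inf_le1)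
    then show ?thesis using B assms that unfolding is_block_def by simp
  qed
  then obtain B' where "is_block m w b B'" "contained_in m (\<lambda>i. B i \<inter> {..<w i}) B'"
    using is_block_superset_exists[of m "\<lambda>i. B i \<inter> {..<w i}" w b] by blast
  then show "\<exists>B'. is_block m w b B' \<and>
      (\<forall>T. admissible m w b t T \<longrightarrow> contained_in m T B \<longrightarrow> contained_in m T B')"
    unfolding admissible_def contained_in_def by blast
qed

lemma GC_num_mono_block_size:
  assumes "\<forall>i<m. t \<le> b i \<and> b i \<le> l i \<and> l i \<le> v i"
  shows "GC_num m v l t \<le> GC_num m v b t"
proof (rule GC_num_le_GC_num)
  show "\<forall>i<m. b i \<le> v i" using assms by force
next
  fix T assume T: "admissible m v l t T"
  have "card (T i) \<le> b i" if "i < m" for i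
  proof -
    have "card (T i) \<le> (\<Sum>j<m. card (T j))" using that by (intro member_le_sum) auto
    then show ?thesis using T assms that unfolding admissible_def by force
  qed
  then show "admissible m v b t T" using T unfolding admissible_def by simp
next
  fix B assume "is_block m v b B"
  then have "\<exists>B'. is_block m v l B' \<and> contained_in m B B'"
    using assms by (intro is_block_superset_exists) (auto simp: is_block_def)
  then show "\<exists>B'. is_block m v l B' \<and>
      (\<forall>T. admissible m v l t T \<longrightarrow> contained_in m T B \<longrightarrow> contained_in m T B')"
    unfolding contained_in_def by blast
qed

theorem theorem3p17:
  fixes m :: nat and v w k l :: "nat \<Rightarrow> nat"
  assumes "\<forall>i<m. 0 < v i \<and> 0 < w i \<and> 0 < k i \<and> 0 < l i"
    and "\<forall>i<m. 2 \<le> k i"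
    and "\<forall>i<m. k i \<le> w i \<and> w i \<le> v i"
    and "\<forall>i<m. k i \<le> l i \<and> l i \<le> v i"
  shows "GC_num m v k 2 \<ge> GC_num m w k 2 \<and> GC_num m v k 2 \<ge> GC_num m v l 2"
  using GC_num_mono_ground[OF assms(3)] GC_num_mono_block_size[of m 2 k l v] assms(2,4)
  by simp

end
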